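(* Let $f\in\mathcal{V}$ and let $\mathcal{C},\mathcal{D}\subseteq\mathbb{R}^n$ be convex cones such that $f$ is positive definite with respect to $\mathcal{C}$ and $\mathcal{C}^-\cap\operatorname{cl}(\mathcal{D})=\{0\}$. Then $(f|_{\mathcal{C}})^\star\in\mathcal{V}$ and $(f|_{\mathcal{C}})^\star$ is positive definite with respect to $\mathcal{D}$.
   Context: Functions are extended real-valued $f:\mathbb{R}^n\to\mathbb{R}\cup\{\pm\infty\}$; $f$ is convex/closed if its epigraph $\{(x,\alpha)\mid \alpha\ge f(x)\}$ is convex/closed. $f$ is positively homogeneous of degree 2 if $f(\lambda x)=\lambda^2 f(x)$ for all $\lambda\ge0$, $x\in\mathbb{R}^n$; $f$ is positive semi-definite if $f(0)=0$ and $f(x)\ge0$ for all $x$. $\mathcal{V}$ is the set of all extended real-valued functions on $\mathbb{R}^n$ that are closed, convex, positive semi-definite and positively homogeneous of degree 2. A convex cone is a nonempty convex set closed under nonnegative scalar multiplication. For a convex cone $\mathcal{C}$, $f\in\mathcal{V}$ is positive definite with respect to $\mathcal{C}$ if there exist $0<\alpha\le\beta<\infty$ with $\alpha\|x\|^2\le f(x)\le\beta\|x\|^2$ for all $x\in\mathcal{C}$. The restriction is $f|_{\mathcal{C}}(x)=f(x)+\delta(x\mid\mathcal{C})$, where $\delta(x\mid\mathcal{C})=0$ if $x\in\mathcal{C}$ and $+\infty$ otherwise. The convex conjugate is $f^\star(y)=\sup_{x\in\mathbb{R}^n}\{y\cdot x-f(x)\}$. $\mathcal{C}^-=\{y\mid\langle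 x,y\rangle\le0\ \forall x\in\mathcal{C}\}$ is the negative polar cone and $\operatorname{cl}$ denotes closure. *)

theory Defs
  imports "HOL-Analysis.Analysis"
begin

definition epi :: "('a \<Rightarrow> ereal) \<Rightarrow> ('a \<times> real) set" where
  "epi f = {(x, a). f x \<le> ereal a}"

definition convex_fun :: "('a::real_vector \<Rightarrow> ereal) \<Rightarrow> bool" where
  "convex_fun f \<longleftrightarrow> convex (epi f)"

definition closed_fun :: "('a::topological_space \<Rightarrow> ereal) \<Rightarrow> bool" where
  "closed_fun f \<longleftrightarrow> closed (epi f)"

definition pos_homog2 :: "('a::real_vector \<Rightarrow> ereal) \<Rightarrow> bool" where
  "pos_homog2 f \<longleftrightarrow> (\<forall>l::real. \<forall>x. l \<ge> 0 \<longrightarrow> f (l *\<^sub>R x) = ereal (l\<^sup>2) * f x)"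

definition pos_semidef :: "('a::real_vector \<Rightarrow> ereal) \<Rightarrow> bool" where
  "pos_semidef f \<longleftrightarrow> f 0 = 0 \<and> (\<forall>x. f x \<ge> 0)"

definition classV :: "('a::real_normed_vector \<Rightarrow> ereal) set" where
  "classV = {f. closed_fun f \<and> convex_fun f \<and> pos_semidef f \<and> pos_homog2 f}"

definition pos_def_wrt :: "('a::real_normed_vector \<Rightarrow> ereal) \<Rightarrow> 'a set \<Rightarrow> bool" where
  "pos_def_wrt f C \<longleftrightarrow> (\<exists>\<alpha> \<beta>::real. 0 < \<alpha> \<and> \<alpha> \<le> \<beta> \<and>
      (\<forall>x\<in>C. ereal (\<alpha> * (norm x)\<^sup>2) \<le> f x \<and> f x \<le> ereal (\<beta> * (norm x)\<^sup>2)))"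

definition restrict_fun :: "('a \<Rightarrow> ereal) \<Rightarrow> 'a set \<Rightarrow> 'a \<Rightarrow> ereal" where
  "restrict_fun f C x = (if x \<in> C then f x else \<infinity>)"

definition conjugate :: "('a::real_inner \<Rightarrow> ereal) \<Rightarrow> 'a \<Rightarrow> ereal" where
  "conjugate f y = (SUP x. ereal (inner y x) - f x)"

definition neg_polar :: "'a::real_inner set \<Rightarrow> 'a set" where
  "neg_polar C = {y. \<forall>x\<in>C. inner x y \<le> 0}"

end

theory Submission
  imports Defs
begin

text \<open>A conjugate is a supremum of affine functions, hence closed and convex, and
  positive semidefiniteness and 2-homogeneity pass from \<open>f|\<^sub>C\<close> to its conjugate by
  rescaling the variable. Conjugation reverses order, so \<open>f \<ge> \<alpha>\<parallel>x\<parallel>\<^sup>2\<close> on \<open>C\<close> gives the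
  upper bound \<open>\<parallel>y\<parallel>\<^sup>2/(4\<alpha>)\<close>. For the lower bound, compactness of the unit sphere in
  \<open>cl D\<close> together with \<open>C\<^sup>- \<inter> cl D = {0}\<close> yields \<open>c > 0\<close> such that every unit vector
  \<open>y\<close> of \<open>cl D\<close> has some \<open>x \<in> C\<close> with \<open>\<parallel>x\<parallel> \<le> 1\<close> and \<open>\<langle>x,y\<rangle> \<ge> c\<close>; testing the
  conjugate at a suitable multiple of \<open>x\<close> and using \<open>f \<le> \<beta>\<parallel>x\<parallel>\<^sup>2\<close> on \<open>C\<close> gives
  \<open>c\<^sup>2\<parallel>y\<parallel>\<^sup>2/(4\<beta>)\<close>.\<close>

lemma closed_ereal_affine_sublevel:
  fixes x :: "'a::real_inner" and e :: ereal
  shows "closed {p :: 'a \<times> real. ereal (inner (fst p) x) - e \<le> ereal (snd p)}"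
proof (cases e)
  case (real r)
  then show ?thesis
    by (simp add: closed_Collect_le continuous_intros)
qed simp_all

lemma convex_ereal_affine_sublevel:
  fixes x :: "'a::real_inner" and e :: ereal
  shows "convex {p :: 'a \<times> real. ereal (inner (fst p) x) - e \<le> ereal (snd p)}"
proof (cases e)
  case (real r)
  have "{p :: 'a \<times> real. ereal (inner (fst p) x) - e \<le> ereal (snd p)} = {p. inner (x, -1) p \<le> r}"
    by (auto simp: real inner_commute)
  then show ?thesis
    by (simp add: convex_halfspace_le)
qed simp_all

lemma epi_conjugate:
  "epi (conjugate g) = (\<Inter>x. {p. ereal (inner (fst p) x) - g x \<le> ereal (snd p)})"
  by (auto simp: epi_def conjugate_def SUP_le_iff)

lemma closed_fun_conjugate: "closed_fun (conjugate (g :: 'a::real_inner \<Rightarrow> ereal))"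
  unfolding closed_fun_def epi_conjugate
  by (intro closed_INT ballI closed_ereal_affine_sublevel)

lemma convex_fun_conjugate: "convex_fun (conjugate g)"
  unfolding convex_fun_def epi_conjugate
  by (intro convex_INT ballI convex_ereal_affine_sublevel)

lemma pos_semidef_conjugate:
  assumes "pos_semidef g"
  shows "pos_semidef (conjugate g)"
proof -
  have "conjugate g 0 \<le> 0"
    using assms unfolding conjugate_def pos_semidef_def
    by (intro SUP_least) (simp add: ereal_minus_le_iff zero_ereal_def)
  moreover have "0 \<le> conjugate g y" for y
    using assms SUP_upper[of 0 UNIV "\<lambda>x. ereal (inner y x) - g x"]
    unfolding conjugate_def pos_semidef_def by (simp add: zero_ereal_def)
  ultimately show ?thesis
    unfolding pos_semidef_def by (auto intro: antisym)
qed

lemma pos_homog2_conjugate: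
  fixes g :: "'a::real_inner \<Rightarrow> ereal"
  assumes "pos_semidef g" and "pos_homog2 g"
  shows "pos_homog2 (conjugate g)"
  unfolding pos_homog2_def
proof (intro allI impI)
  fix l :: real and y :: 'a
  assume "l \<ge> 0"
  show "conjugate g (l *\<^sub>R y) = ereal (l\<^sup>2) * conjugate g y"
  proof (cases "l = 0")
    case True
    then show ?thesis
      using pos_semidef_conjugate[OF assms(1)] by (simp add: pos_semidef_def)
  next
    case False
    with \<open>l \<ge> 0\<close> have "l > 0" by simp
    have scale: "ereal (inner (l *\<^sub>R y) (l *\<^sub>R x)) - g (l *\<^sub>R x) = ereal (l\<^sup>2) * (ereal (inner y x) - g x)" for x
      using assms(2) \<open>l > 0\<close> unfolding pos_homog2_def
      by (cases "g x") (auto simp: power2_eq_square algebra_simps)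
    have "surj (\<lambda>x::'a. l *\<^sub>R x)"
      by (rule surjI[where f = "\<lambda>x. inverse l *\<^sub>R x"]) (use \<open>l > 0\<close> in simp)
    then have "conjugate g (l *\<^sub>R y) = (SUP x\<in>range (\<lambda>x. l *\<^sub>R x). ereal (inner (l *\<^sub>R y) x) - g x)"
      by (simp add: conjugate_def)
    also have "\<dots> = (SUP x. ereal (inner (l *\<^sub>R y) (l *\<^sub>R x)) - g (l *\<^sub>R x))"
      by (simp add: image_comp)
    also have "\<dots> = ereal (l\<^sup>2) * conjugate g y"
      unfolding scale conjugate_def by (rule Sup_ereal_mult_left'[symmetric]) simp_all
    finally show ?thesis .
  qed
qed

lemma conjugate_in_classV:
  fixes g :: "'a::real_inner \<Rightarrow> ereal"
  assumes "pos_semidef g" and "pos_homog2 g"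
  shows "conjugate g \<in> classV"
  using assms closed_fun_conjugate convex_fun_conjugate pos_semidef_conjugate pos_homog2_conjugate
  by (auto simp: classV_def)

lemma conjugate_antimono:
  assumes "\<And>x. g x \<le> h x"
  shows "conjugate h y \<le> conjugate g y"
  unfolding conjugate_def using assms by (intro SUP_mono) (auto intro: ereal_minus_mono)

lemma conjugate_scaled_norm_sq_le:
  fixes y :: "'a::real_inner"
  assumes "0 < a"
  shows "conjugate (\<lambda>x. ereal (a * (norm x)\<^sup>2)) y \<le> ereal ((norm y)\<^sup>2 / (4 * a))"
  unfolding conjugate_def
proof (rule SUP_least)
  fix x :: 'a
  have "inner y x - a * (norm x)\<^sup>2 \<le> norm y * norm x - a * (norm x)\<^sup>2"
    using norm_cauchy_schwarz[of y x] by simp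
  also have "\<dots> = (norm y)\<^sup>2 / (4 * a) - (norm y - 2 * a * norm x)\<^sup>2 / (4 * a)"
    using assms by (simp add: field_simps power2_eq_square)
  also have "\<dots> \<le> (norm y)\<^sup>2 / (4 * a)"
    using assms by simp
  finally show "ereal (inner y x) - ereal (a * (norm x)\<^sup>2) \<le> ereal ((norm y)\<^sup>2 / (4 * a))"
    by simp
qed

lemma pos_semidef_restrict_fun: "pos_semidef f \<Longrightarrow> 0 \<in> C \<Longrightarrow> pos_semidef (restrict_fun f C)"
  by (simp add: pos_semidef_def restrict_fun_def)

lemma pos_homog2_restrict_fun:
  assumes "pos_homog2 f" and "conic C" and "0 \<in> C"
  shows "pos_homog2 (restrict_fun f C)"
  unfolding pos_homog2_def
proof (intro allI impI)
  fix l :: real and x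
  assume "l \<ge> 0"
  show "restrict_fun f C (l *\<^sub>R x) = ereal (l\<^sup>2) * restrict_fun f C x"
  proof (cases "l = 0")
    case True
    have "f 0 = ereal (0\<^sup>2) * f 0"
      using assms(1) unfolding pos_homog2_def by (metis order_refl scaleR_zero_left)
    then have "f 0 = 0"
      by (simp add: zero_ereal_def[symmetric])
    then show ?thesis
      using True \<open>0 \<in> C\<close> by (simp add: restrict_fun_def)
  next
    case False
    with \<open>l \<ge> 0\<close> have "l > 0" by simp
    have "l *\<^sub>R x \<in> C \<longleftrightarrow> x \<in> C"
      using conicD[OF \<open>conic C\<close>, of "l *\<^sub>R x" "inverse l"] conicD[OF \<open>conic C\<close>, of x l] \<open>l > 0\<close>
      by auto
    then show ?thesis
      using assms(1) \<open>l > 0\<close> by (simp add: restrict_fun_def pos_homog2_def)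
  qed
qed

lemma conjugate_restrict_fun_ge:
  fixes f :: "'a::real_inner \<Rightarrow> ereal"
  assumes "conic C" and "0 < b" and bound: "\<And>x. x \<in> C \<Longrightarrow> f x \<le> ereal (b * (norm x)\<^sup>2)"
    and "x \<in> C" and "norm x \<le> 1" and "0 \<le> s" and "s \<le> inner x y"
  shows "ereal (s\<^sup>2 / (4 * b)) \<le> conjugate (restrict_fun f C) y"
proof -
  define t where "t = s / (2 * b)"
  have "t \<ge> 0"
    using assms by (simp add: t_def)
  then have tx: "t *\<^sub>R x \<in> C"
    using conicD[OF \<open>conic C\<close> \<open>x \<in> C\<close>] by simp
  have "b * (norm (t *\<^sub>R x))\<^sup>2 \<le> b * t\<^sup>2"
    using \<open>t \<ge> 0\<close> \<open>0 < b\<close> \<open>norm x \<le> 1\<close> by (simp add: power_mult_distrib power_le_one mult_left_le)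
  then have f_tx: "f (t *\<^sub>R x) \<le> ereal (b * t\<^sup>2)"
    using bound[OF tx] order_trans by fastforce
  have "s\<^sup>2 / (4 * b) = t * s - b * t\<^sup>2"
    using \<open>0 < b\<close> by (simp add: t_def field_simps power2_eq_square)
  also have "\<dots> \<le> inner y (t *\<^sub>R x) - b * t\<^sup>2"
    using \<open>t \<ge> 0\<close> \<open>s \<le> inner x y\<close> by (simp add: inner_commute mult_left_mono)
  finally have "ereal (s\<^sup>2 / (4 * b)) \<le> ereal (inner y (t *\<^sub>R x)) - ereal (b * t\<^sup>2)"
    by simp
  also have "\<dots> \<le> ereal (inner y (t *\<^sub>R x)) - f (t *\<^sub>R x)"
    by (rule ereal_minus_mono[OF order_refl f_tx])
  also have "\<dots> = ereal (inner y (t *\<^sub>R x)) - restrict_fun f C (t *\<^sub>R x)"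
    using tx by (simp add: restrict_fun_def)
  also have "\<dots> \<le> conjugate (restrict_fun f C) y"
    unfolding conjugate_def by (rule SUP_upper) simp
  finally show ?thesis .
qed

lemma conjugate_restrict_fun_le_norm_sq:
  fixes f :: "'a::real_inner \<Rightarrow> ereal"
  assumes "0 < a" and "\<And>x. x \<in> C \<Longrightarrow> ereal (a * (norm x)\<^sup>2) \<le> f x"
  shows "conjugate (restrict_fun f C) y \<le> ereal ((norm y)\<^sup>2 / (4 * a))"
proof -
  have "conjugate (restrict_fun f C) y \<le> conjugate (\<lambda>x. ereal (a * (norm x)\<^sup>2)) y"
    by (rule conjugate_antimono) (simp add: restrict_fun_def assms(2))
  also have "\<dots> \<le> ereal ((norm y)\<^sup>2 / (4 * a))"
    by (rule conjugate_scaled_norm_sq_le[OF \<open>0 < a\<close>])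
  finally show ?thesis .
qed

lemma conjugate_restrict_fun_ge_norm_sq:
  fixes f :: "'a::real_inner \<Rightarrow> ereal"
  assumes "conic C" and "0 \<in> C" and "conic D" and "0 < b" and "0 \<le> c"
    and bound: "\<And>x. x \<in> C \<Longrightarrow> f x \<le> ereal (b * (norm x)\<^sup>2)"
    and witness: "\<And>u. u \<in> closure D \<inter> sphere 0 1 \<Longrightarrow> \<exists>x\<in>C. norm x \<le> 1 \<and> c \<le> inner x u"
    and "y \<in> D"
  shows "ereal (c\<^sup>2 / (4 * b) * (norm y)\<^sup>2) \<le> conjugate (restrict_fun f C) y"
proof -
  obtain x where "x \<in> C" "norm x \<le> 1" "c * norm y \<le> inner x y"
  proof (cases "y = 0")
    case False
    have "(1 / norm y) *\<^sub>R y \<in> D"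
      using conicD[OF \<open>conic D\<close> \<open>y \<in> D\<close>] by simp
    then have "(1 / norm y) *\<^sub>R y \<in> closure D \<inter> sphere 0 1"
      using closure_subset False by auto
    then show ?thesis
      using witness that False by (fastforce simp: field_simps)
  qed (use \<open>0 \<in> C\<close> that in simp)
  then have "ereal ((c * norm y)\<^sup>2 / (4 * b)) \<le> conjugate (restrict_fun f C) y"
    using assms by (intro conjugate_restrict_fun_ge[OF \<open>conic C\<close>]) auto
  then show ?thesis
    by (simp add: power_mult_distrib)
qed

lemma uniform_inner_witness_on_sphere:
  fixes C D :: "'a::euclidean_space set"
  assumes "conic C" and polar: "neg_polar C \<inter> closure D = {0}"
  shows "\<exists>c>0. \<forall>y\<in>closure D \<inter> sphere 0 1. \<exists>x\<in>C. norm x \<le> 1 \<and> c \<le> inner x y"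
proof (rule ccontr)
  assume "\<not> ?thesis"
  then have "\<forall>k::nat. \<exists>y\<in>closure D \<inter> sphere 0 1. \<forall>x\<in>C. norm x \<le> 1 \<longrightarrow> inner x y < inverse (Suc k)"
    by (metis inverse_positive_iff_positive not_le of_nat_0_less_iff zero_less_Suc)
  then obtain Y where Y: "\<And>k. Y k \<in> closure D \<inter> sphere 0 1"
    and Y_small: "\<And>k x. x \<in> C \<Longrightarrow> norm x \<le> 1 \<Longrightarrow> inner x (Y k) < inverse (Suc k)"
    by metis
  have "compact (closure D \<inter> sphere 0 1)"
    by (simp add: closed_Int_compact)
  then obtain l r where l: "l \<in> closure D \<inter> sphere 0 1" and "strict_mono r" and "(Y \<circ> r) \<longlonglongrightarrow> l"
    using compact_imp_seq_compact seq_compactE Y by metis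
  have unit: "inner x l \<le> 0" if "x \<in> C" and "norm x \<le> 1" for x
  proof (rule LIMSEQ_le)
    show "(\<lambda>n. inner x ((Y \<circ> r) n)) \<longlonglongrightarrow> inner x l"
      by (intro tendsto_intros \<open>(Y \<circ> r) \<longlonglongrightarrow> l\<close>)
    show "((\<lambda>n. inverse (Suc n)) \<circ> r) \<longlonglongrightarrow> (0::real)"
      by (rule LIMSEQ_subseq_LIMSEQ[OF LIMSEQ_inverse_real_of_nat \<open>strict_mono r\<close>])
    show "\<exists>N. \<forall>n\<ge>N. inner x ((Y \<circ> r) n) \<le> ((\<lambda>n. inverse (Suc n)) \<circ> r) n"
      using Y_small[OF that] by (auto intro: less_imp_le)
  qed
  have "l \<in> neg_polar C"
    unfolding neg_polar_def
  proof safe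
    fix x
    assume "x \<in> C"
    show "inner x l \<le> 0"
    proof (cases "x = 0")
      case False
      have "(1 / norm x) *\<^sub>R x \<in> C"
        using conicD[OF \<open>conic C\<close> \<open>x \<in> C\<close>] by simp
      then have "inner ((1 / norm x) *\<^sub>R x) l \<le> 0"
        using False by (intro unit) auto
      then show ?thesis
        using False by (simp add: divide_le_0_iff)
    qed simp
  qed
  then have "l = 0"
    using polar l by blast
  then show False
    using l by simp
qed

theorem theorem1:
  fixes f :: "real^'n \<Rightarrow> ereal" and C D :: "(real^'n) set"
  assumes "f \<in> classV"
    and "convex_cone C" and "convex_cone D"
    and "pos_def_wrt f C"
    and "neg_polar C \<inter> closure D = {0}"
  shows "conjugate (restrict_fun f C) \<in> classV \<and> pos_def_wrt (conjugate (restrict_fun f C)) D"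
proof -
  let ?g = "restrict_fun f C"
  have C: "conic C" "0 \<in> C" and "conic D"
    using assms(2,3) by (auto simp: convex_cone_def conic_contains_0)
  have "conjugate ?g \<in> classV"
    using assms(1) C
    by (intro conjugate_in_classV pos_semidef_restrict_fun pos_homog2_restrict_fun) (auto simp: classV_def)
  obtain a b :: real where "0 < a" "a \<le> b"
    and bounds: "\<And>x. x \<in> C \<Longrightarrow> ereal (a * (norm x)\<^sup>2) \<le> f x \<and> f x \<le> ereal (b * (norm x)\<^sup>2)"
    using assms(4) unfolding pos_def_wrt_def by blast
  obtain c where "c > 0"
    and witness: "\<And>u. u \<in> closure D \<inter> sphere 0 1 \<Longrightarrow> \<exists>x\<in>C. norm x \<le> 1 \<and> c \<le> inner x u"
    using uniform_inner_witness_on_sphere[OF C(1) assms(5)] by blast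
  have "pos_def_wrt (conjugate ?g) D"
    unfolding pos_def_wrt_def
  proof (intro exI conjI ballI)
    fix y
    assume "y \<in> D"
    show "ereal (c\<^sup>2 / (4 * b) * (norm y)\<^sup>2) \<le> conjugate ?g y"
      using C \<open>conic D\<close> \<open>0 < a\<close> \<open>a \<le> b\<close> \<open>c > 0\<close> bounds witness \<open>y \<in> D\<close>
      by (intro conjugate_restrict_fun_ge_norm_sq) auto
    have "(norm y)\<^sup>2 / (4 * a) \<le> max (c\<^sup>2 / (4 * b)) (1 / (4 * a)) * (norm y)\<^sup>2"
      using mult_right_mono[OF max.cobounded2[of "1 / (4 * a)" "c\<^sup>2 / (4 * b)"] zero_le_power2[of "norm y"]]
      by simp
    then show "conjugate ?g y \<le> ereal (max (c\<^sup>2 / (4 * b)) (1 / (4 * a)) * (norm y)\<^sup>2)"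
      using conjugate_restrict_fun_le_norm_sq[OF \<open>0 < a\<close>, of C f y] bounds order_trans by fastforce
  qed (use \<open>c > 0\<close> \<open>0 < a\<close> \<open>a \<le> b\<close> in auto)
  then show ?thesis
    using \<open>conjugate ?g \<in> classV\<close> by blast
qed

end
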